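(* Let $B$ be a C*-algebra and $A$ a regular subalgebra of $B$. Then: (i) for every closed two-sided ideal $J$ of $B$, $J\cap A$ is normalizer-invariant; (ii) every normalizer-invariant closed two-sided ideal of $A$ is $B$-invariant; (iii) $A$ satisfies axiom (inv) relative to $B$.
   Context: $A\subseteq B$ is a closed *-subalgebra. A normalizer of $A$ in $B$ is an element $n\in B$ with $n^*An\subseteq A$ and $nAn^*\subseteq A$. $A$ is a regular subalgebra of $B$ if the normalizers span a dense subspace of $B$ and $A$ contains an approximate unit for $B$. A subset $S\subseteq A$ is normalizer-invariant if $nSn^*\subseteq S$ for every normalizer $n$. For $S\subseteq B$, $S$ is $B$-invariant if $[SB]=[BS]$, where $[\cdot]$ is closed linear span. $A$ satisfies axiom (inv) relative to $B$ if $J\cap A$ is $B$-invariant for every closed two-sided ideal $J$ of $B$. *)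

theory Defs
  imports "HOL-Analysis.Analysis"
begin

text \<open>The real structure comes from real_normed_algebra;
the complex scalar multiplication cscale extends scaleR.\<close>

class cstar_algebra = real_normed_algebra + banach +
  fixes cscale :: "complex \<Rightarrow> 'a \<Rightarrow> 'a"
    and cstar :: "'a \<Rightarrow> 'a"
  assumes cscale_of_real: "cscale (of_real r) x = scaleR r x"
    and cscale_add_right: "cscale c (x + y) = cscale c x + cscale c y"
    and cscale_add_left: "cscale (c + d) x = cscale c x + cscale d x"
    and cscale_cscale: "cscale c (cscale d x) = cscale (c * d) x"
    and cscale_one: "cscale 1 x = x"
    and norm_cscale: "norm (cscale c x) = cmod c * norm x"
    and cscale_mult_left: "cscale c x * y = cscale c (x * y)"
    and cscale_mult_right: "x * cscale c y = cscale c (x * y)"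
    and cstar_cstar: "cstar (cstar x) = x"
    and cstar_add: "cstar (x + y) = cstar x + cstar y"
    and cstar_cscale: "cstar (cscale c x) = cscale (cnj c) (cstar x)"
    and cstar_mult: "cstar (x * y) = cstar y * cstar x"
    and cstar_identity: "norm (cstar x * x) = norm x ^ 2"

definition csubspace :: "'a::cstar_algebra set \<Rightarrow> bool" where
  "csubspace S \<longleftrightarrow> 0 \<in> S \<and> (\<forall>x\<in>S. \<forall>y\<in>S. x + y \<in> S) \<and> (\<forall>c. \<forall>x\<in>S. cscale c x \<in> S)"

definition clin_span :: "'a::cstar_algebra set \<Rightarrow> 'a set" where
  "clin_span S = {x. \<exists>F c. finite F \<and> F \<subseteq> S \<and> x = (\<Sum>s\<in>F. cscale (c s) s)}"

definition clspan :: "'a::cstar_algebra set \<Rightarrow> 'a set" where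
  "clspan S = closure (clin_span S)"

definition setmult :: "'a::times set \<Rightarrow> 'a set \<Rightarrow> 'a set" where
  "setmult S T = {s * t | s t. s \<in> S \<and> t \<in> T}"

text \<open>Closed *-subalgebra of the C*-algebra B (= UNIV of the type).\<close>
definition closed_star_subalgebra :: "'a::cstar_algebra set \<Rightarrow> bool" where
  "closed_star_subalgebra A \<longleftrightarrow> csubspace A \<and> closed A \<and>
     (\<forall>x\<in>A. \<forall>y\<in>A. x * y \<in> A) \<and> (\<forall>x\<in>A. cstar x \<in> A)"

definition closed_ideal :: "'a::cstar_algebra set \<Rightarrow> bool" where
  "closed_ideal J \<longleftrightarrow> csubspace J \<and> closed J \<and> (\<forall>x\<in>J. \<forall>b. b * x \<in> J \<and> x * b \<in> J)"

definition closed_ideal_of :: "'a::cstar_algebra set \<Rightarrow> 'a set \<Rightarrow> bool" where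
  "closed_ideal_of A I \<longleftrightarrow> I \<subseteq> A \<and> csubspace I \<and> closed I \<and>
     (\<forall>x\<in>I. \<forall>a\<in>A. a * x \<in> I \<and> x * a \<in> I)"

definition cpositive :: "'a::cstar_algebra \<Rightarrow> bool" where
  "cpositive x \<longleftrightarrow> (\<exists>y. x = cstar y * y)"

text \<open>A contains an approximate unit for B: a net of positive contractions in A
(the net is encoded as a proper filter on the algebra, i.e. the image filter of the net)
with e b \<rightarrow> b and b e \<rightarrow> b for all b in B.\<close>
definition contains_approx_unit :: "'a::cstar_algebra set \<Rightarrow> bool" where
  "contains_approx_unit A \<longleftrightarrow> (\<exists>F. F \<noteq> bot \<and>
     eventually (\<lambda>e. e \<in> A \<and> cpositive e \<and> norm e \<le> 1) F \<and>
     (\<forall>b. ((\<lambda>e. e * b) \<longlongrightarrow> b) F \<and> ((\<lambda>e. b * e) \<longlongrightarrow> b) F))"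

definition normalizer :: "'a::cstar_algebra set \<Rightarrow> 'a \<Rightarrow> bool" where
  "normalizer A n \<longleftrightarrow> (\<forall>a\<in>A. cstar n * a * n \<in> A \<and> n * a * cstar n \<in> A)"

definition regular_subalgebra :: "'a::cstar_algebra set \<Rightarrow> bool" where
  "regular_subalgebra A \<longleftrightarrow> closed_star_subalgebra A \<and>
     clspan {n. normalizer A n} = UNIV \<and> contains_approx_unit A"

definition normalizer_invariant :: "'a::cstar_algebra set \<Rightarrow> 'a set \<Rightarrow> bool" where
  "normalizer_invariant A S \<longleftrightarrow> (\<forall>n. normalizer A n \<longrightarrow> (\<forall>s\<in>S. n * s * cstar n \<in> S))"

definition B_invariant :: "'a::cstar_algebra set \<Rightarrow> bool" where
  "B_invariant S \<longleftrightarrow> clspan (setmult S UNIV) = clspan (setmult UNIV S)"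

definition axiom_inv :: "'a::cstar_algebra set \<Rightarrow> bool" where
  "axiom_inv A \<longleftrightarrow> (\<forall>J. closed_ideal J \<longrightarrow> B_invariant (J \<inter> A))"

end

theory Submission
  imports Defs
begin

text \<open>
Everything rests on an approximation fact valid in any C*-algebra \<open>B\<close>: every \<open>z\<close>
lies in the closed left ideal generated by \<open>t\<^sup>2\<close>, where \<open>t = z\<^sup>* z\<close>. Indeed
\<open>z (1 - q)\<^sup>n \<longlonglongrightarrow> 0\<close> for \<open>q = t\<^sup>2 / M\<^sup>2\<close> with \<open>M > \<parallel>t\<parallel>\<close>, while
\<open>z - z (1 - q)\<^sup>n\<close> is a combination of elements \<open>b t\<^sup>2\<close>; taking adjoints puts \<open>z\<close>
in the closed right ideal generated by \<open>(z z\<^sup>*)\<^sup>2\<close>.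

For \<open>x\<close> in a normalizer-invariant ideal \<open>I\<close> of \<open>A\<close> and a normalizer \<open>n\<close> we have
\<open>(x n)\<^sup>* (x n) = n\<^sup>* (x\<^sup>* x) n \<in> I\<close>, so \<open>x n \<in> [B I]\<close>; as the normalizers span a
dense subspace, \<open>x b \<in> [B I]\<close> for all \<open>b\<close>, that is \<open>[I B] \<subseteq> [B I]\<close>, and
symmetrically. Part (i) is immediate and (iii) is (ii) for \<open>J \<inter> A\<close>.

Without a continuous functional calculus, \<open>z (1 - q)\<^sup>n \<longlonglongrightarrow> 0\<close> is shown in the
algebra of bounded operators on \<open>B\<close>: left multiplication by \<open>h = t / M\<close> is hermitian
for the \<open>B\<close>-valued inner product \<open>y\<^sup>* z\<close>, and
\<open>\<parallel>z (1 - q)\<^sup>n\<parallel>\<^sup>2 \<le> M \<parallel>h (1 - h\<^sup>2)\<^sup>2\<^sup>n\<parallel>\<close>. The operators \<open>h\<^sup>2 (1 - h\<^sup>2)\<^sup>j\<close> are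
positive, decrease in \<open>j\<close> and sum to \<open>1 - (1 - h\<^sup>2)\<^sup>m\<close>, which forces
\<open>(m + 1) \<parallel>h\<^sup>2 (1 - h\<^sup>2)\<^sup>m\<parallel> \<le> 2\<close>. Positive means the square of a hermitian operator
from a commutative family; closure under sums comes from a power series for \<open>\<surd>(1 - T)\<close>.
\<close>

section \<open>The algebra of bounded operators\<close>

text \<open>A copy of \<open>'a \<Rightarrow>\<^sub>L 'a\<close> that is a normed algebra under composition; the library
  type carries no multiplication.\<close>

typedef (overloaded) 'a bop = "UNIV :: ('a::real_normed_vector \<Rightarrow>\<^sub>L 'a) set"
  morphisms blinfun_of_bop bop_of_blinfun by simp

setup_lifting type_definition_bop

instantiation bop :: (real_normed_vector) real_normed_vector
begin

lift_definition norm_bop :: "'a bop \<Rightarrow> real" is norm .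
lift_definition minus_bop :: "'a bop \<Rightarrow> 'a bop \<Rightarrow> 'a bop" is "(-)" .
lift_definition plus_bop :: "'a bop \<Rightarrow> 'a bop \<Rightarrow> 'a bop" is "(+)" .
lift_definition uminus_bop :: "'a bop \<Rightarrow> 'a bop" is "uminus" .
lift_definition zero_bop :: "'a bop" is "0" .
lift_definition scaleR_bop :: "real \<Rightarrow> 'a bop \<Rightarrow> 'a bop" is "scaleR" .

definition dist_bop :: "'a bop \<Rightarrow> 'a bop \<Rightarrow> real"
  where "dist_bop a b = norm (a - b)"

definition uniformity_bop :: "('a bop \<times> 'a bop) filter"
  where "uniformity_bop = (INF e\<in>{0 <..}. principal {(x, y). dist x y < e})"

definition open_bop :: "'a bop set \<Rightarrow> bool"
  where "open_bop S = (\<forall>x\<in>S. \<forall>\<^sub>F (x', y) in uniformity. x' = x \<longrightarrow> y \<in> S)"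

definition sgn_bop :: "'a bop \<Rightarrow> 'a bop"
  where "sgn_bop x = scaleR (inverse (norm x)) x"

instance
  by standard (unfold dist_bop_def open_bop_def sgn_bop_def uniformity_bop_def,
      (rule refl | (transfer, force simp: norm_triangle_ineq algebra_simps))+)

end

instantiation bop :: (real_normed_vector) "{real_normed_algebra, monoid_mult}"
begin

lift_definition times_bop :: "'a bop \<Rightarrow> 'a bop \<Rightarrow> 'a bop" is blinfun_compose .
lift_definition one_bop :: "'a bop" is id_blinfun .

instance
  by standard (transfer; (rule norm_blinfun_compose
      | (rule blinfun_eqI, simp add: blinfun.bilinear_simps)))+

end

instance bop :: (banach) banach
proof
  fix X :: "nat \<Rightarrow> 'a bop"
  assume "Cauchy X"
  then have "Cauchy (\<lambda>n. blinfun_of_bop (X n))"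
    unfolding Cauchy_def dist_norm by transfer
  then obtain L where "(\<lambda>n. blinfun_of_bop (X n)) \<longlonglongrightarrow> L"
    using convergent_eq_Cauchy convergent_def by blast
  then have "X \<longlonglongrightarrow> bop_of_blinfun L"
    unfolding LIMSEQ_iff dist_norm by transfer
  then show "convergent X" by (auto simp: convergent_def)
qed

lift_definition bop_apply :: "'a::real_normed_vector bop \<Rightarrow> 'a \<Rightarrow> 'a" is blinfun_apply .

lemma bop_eqI: "(\<And>y. bop_apply S y = bop_apply T y) \<Longrightarrow> S = T"
  by transfer (rule blinfun_eqI)

lemma bop_apply_times [simp]: "bop_apply (S * T) y = bop_apply S (bop_apply T y)"
  by transfer simp

lemma bop_apply_one [simp]: "bop_apply 1 y = y"
  by transfer simp

lemma bop_apply_zero [simp]: "bop_apply 0 y = 0"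
  by transfer simp

lemma bop_apply_add [simp]: "bop_apply (S + T) y = bop_apply S y + bop_apply T y"
  by transfer (simp add: blinfun.bilinear_simps)

lemma bop_apply_diff [simp]: "bop_apply (S - T) y = bop_apply S y - bop_apply T y"
  by transfer (simp add: blinfun.bilinear_simps)

lemma bop_apply_scaleR [simp]: "bop_apply (r *\<^sub>R T) y = r *\<^sub>R bop_apply T y"
  by transfer (simp add: blinfun.bilinear_simps)

lemma norm_bop_apply: "norm (bop_apply T y) \<le> norm T * norm y"
  by transfer (rule norm_blinfun)

lemma norm_bop_bound: "0 \<le> b \<Longrightarrow> (\<And>y. norm (bop_apply T y) \<le> b * norm y) \<Longrightarrow> norm T \<le> b"
  by transfer (rule norm_blinfun_bound)

lemma bounded_linear_bop_apply_left: "bounded_linear (\<lambda>T. bop_apply T y)"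
  by (rule bounded_linear_intro[where K = "norm y"]) (auto simp: norm_bop_apply)

lemma norm_one_bop: "norm (1 :: 'a::real_normed_vector bop) \<le> 1"
  by (rule norm_bop_bound) auto

lemma norm_power_bop_le_one:
  fixes T :: "'a::real_normed_vector bop"
  assumes "norm T \<le> 1"
  shows "norm (T ^ n) \<le> 1"
proof (induction n)
  case 0
  then show ?case using norm_one_bop by simp
next
  case (Suc n)
  have "norm (T ^ Suc n) \<le> norm T * norm (T ^ n)" by (simp add: norm_mult_ineq)
  also have "\<dots> \<le> 1" using Suc assms by (simp add: mult_le_one)
  finally show ?case .
qed

lemma cscale_zero_left [simp]: "cscale 0 (x::'a::cstar_algebra) = 0"
  using cscale_of_real[of 0 x] by simp

lemma cscale_zero_right [simp]: "cscale c (0::'a::cstar_algebra) = 0"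
  using cscale_add_right[of c "0::'a" 0] by simp

lemma cscale_minus_left: "cscale (- c) (x::'a::cstar_algebra) = - cscale c x"
  using cscale_add_left[of c "- c" x] by (metis add.right_inverse cscale_zero_left neg_eq_iff_add_eq_0)

lemma cstar_zero [simp]: "cstar (0::'a::cstar_algebra) = 0"
  using cstar_add[of "0::'a" 0] by simp

lemma cstar_minus: "cstar (- x) = - cstar (x::'a::cstar_algebra)"
  using cstar_add[of x "- x"] by (metis add.right_inverse cstar_zero neg_eq_iff_add_eq_0)

lemma cstar_diff: "cstar (x - y) = cstar x - cstar (y::'a::cstar_algebra)"
  by (simp only: cstar_add cstar_minus diff_conv_add_uminus)

lemma cstar_scaleR: "cstar (r *\<^sub>R x) = r *\<^sub>R cstar (x::'a::cstar_algebra)"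
  using cstar_cscale[of "complex_of_real r" x] by (simp add: cscale_of_real)

lemma norm_cstar [simp]: "norm (cstar x) = norm (x::'a::cstar_algebra)"
proof -
  have le: "norm z \<le> norm (cstar z)" for z :: 'a
  proof (cases "z = 0")
    case False
    have "norm z * norm z = norm (cstar z * z)" by (simp add: cstar_identity power2_eq_square)
    also have "\<dots> \<le> norm (cstar z) * norm z" by (rule norm_mult_ineq)
    finally show ?thesis using False by simp
  qed simp
  show ?thesis using le[of x] le[of "cstar x"] by (simp add: cstar_cstar)
qed

lemma bounded_linear_cstar: "bounded_linear (cstar :: 'a::cstar_algebra \<Rightarrow> 'a)"
  by (rule bounded_linear_intro[where K = 1]) (auto simp: cstar_add cstar_scaleR)

lemma bounded_linear_cscale: "bounded_linear (cscale c :: 'a::cstar_algebra \<Rightarrow> 'a)"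
  by (rule bounded_linear_intro[where K = "cmod c"])
    (auto simp: cscale_add_right norm_cscale cscale_cscale mult.commute
      cscale_of_real[symmetric])

lemma cstar_add_cscale_times_self:
  fixes u v :: "'a::cstar_algebra"
  shows "cstar (u + cscale c v) * (u + cscale c v) =
    cstar u * u + cscale c (cstar u * v) + cscale (cnj c) (cstar v * u)
      + cscale (cnj c * c) (cstar v * v)"
  by (simp only: cstar_add cstar_cscale distrib_left distrib_right cscale_mult_left
      cscale_mult_right cscale_cscale cscale_add_right mult.commute[of c "cnj c"] add_ac)

definition hermitian :: "'a::cstar_algebra bop \<Rightarrow> bool" where
  "hermitian T \<longleftrightarrow> (\<forall>y z. cstar (bop_apply T y) * z = cstar y * bop_apply T z)"

lemma hermitianD: "hermitian T \<Longrightarrow> cstar (bop_apply T y) * z = cstar y * bop_apply T z"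
  unfolding hermitian_def by blast

lemma hermitian_one: "hermitian 1"
  unfolding hermitian_def by simp

lemma hermitian_zero: "hermitian 0"
  unfolding hermitian_def by simp

lemma hermitian_add: "hermitian S \<Longrightarrow> hermitian T \<Longrightarrow> hermitian (S + T)"
  unfolding hermitian_def by (simp add: cstar_add distrib_left distrib_right)

lemma hermitian_diff: "hermitian S \<Longrightarrow> hermitian T \<Longrightarrow> hermitian (S - T)"
  unfolding hermitian_def by (simp add: cstar_diff left_diff_distrib right_diff_distrib)

lemma hermitian_scaleR: "hermitian T \<Longrightarrow> hermitian (r *\<^sub>R T)"
  unfolding hermitian_def by (simp add: cstar_scaleR)

lemma hermitian_mult:
  assumes "hermitian S" "hermitian T" "S * T = T * S"
  shows "hermitian (S * T)"
proof -
  have "bop_apply S (bop_apply T z) = bop_apply T (bop_apply S z)" for z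
    using arg_cong[OF assms(3), of "\<lambda>U. bop_apply U z"] by simp
  then show ?thesis
    unfolding hermitian_def using hermitianD[OF assms(1)] hermitianD[OF assms(2)] by simp
qed

lemma hermitian_power: "hermitian T \<Longrightarrow> hermitian (T ^ n)"
  by (induction n) (auto simp: hermitian_one hermitian_mult power_commutes)

lemma hermitian_suminf:
  assumes "summable f" "\<And>n. hermitian (f n)"
  shows "hermitian (suminf f)"
  unfolding hermitian_def
proof (intro allI)
  fix y z :: 'a
  note apply_suminf = bounded_linear.suminf[OF bounded_linear_bop_apply_left assms(1)]
  have sum_y: "summable (\<lambda>n. bop_apply (f n) y)" and sum_z: "summable (\<lambda>n. bop_apply (f n) z)"
    using bounded_linear.summable[OF bounded_linear_bop_apply_left assms(1)] by auto
  have sum_star_y: "summable (\<lambda>n. cstar (bop_apply (f n) y))"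
    using bounded_linear.summable[OF bounded_linear_cstar sum_y] .
  have "cstar (bop_apply (suminf f) y) * z = (\<Sum>n. cstar (bop_apply (f n) y)) * z"
    by (simp add: apply_suminf bounded_linear.suminf[OF bounded_linear_cstar sum_y])
  also have "\<dots> = (\<Sum>n. cstar (bop_apply (f n) y) * z)" by (rule suminf_mult2[OF sum_star_y])
  also have "\<dots> = (\<Sum>n. cstar y * bop_apply (f n) z)" using assms(2) by (simp add: hermitianD)
  also have "\<dots> = cstar y * (\<Sum>n. bop_apply (f n) z)" by (rule suminf_mult[OF sum_z])
  also have "\<dots> = cstar y * bop_apply (suminf f) z" by (simp add: apply_suminf)
  finally show "cstar (bop_apply (suminf f) y) * z = cstar y * bop_apply (suminf f) z" .
qed

text \<open>With \<open>u = a y\<close> and \<open>v = k y\<close>, both \<open>(u \<plusminus> i v)\<^sup>* (u \<plusminus> i v)\<close> equal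
  \<open>y\<^sup>* (a\<^sup>2 + k\<^sup>2) y\<close>, because the cross terms \<open>u\<^sup>* v = v\<^sup>* u = y\<^sup>* a k y\<close>
  cancel; the C*-identity bounds \<open>u \<plusminus> i v\<close>, and \<open>2u\<close> is their sum.\<close>

lemma norm_add_cscale_apply_sq_le:
  fixes a k :: "'a::cstar_algebra bop"
  assumes a: "hermitian a" and k: "hermitian k" and comm: "a * k = k * a"
    and c: "c = \<i> \<or> c = - \<i>"
  shows "norm (bop_apply a y + cscale c (bop_apply k y)) ^ 2 \<le> norm (a * a + k * k) * norm y ^ 2"
proof -
  define u where "u = bop_apply a y"
  define v where "v = bop_apply k y"
  have cross: "cstar u * v = cstar y * bop_apply (a * k) y"
    "cstar v * u = cstar y * bop_apply (a * k) y"
    unfolding u_def v_def using hermitianD[OF a] hermitianD[OF k]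
    by (simp_all flip: bop_apply_times add: comm)
  have squares: "cstar u * u = cstar y * bop_apply (a * a) y"
    "cstar v * v = cstar y * bop_apply (k * k) y"
    unfolding u_def v_def using hermitianD[OF a] hermitianD[OF k] by simp_all
  have "cnj c * c = 1" using c by auto
  moreover have "cscale c w + cscale (cnj c) w = 0" for w :: 'a
    using c by (auto simp: cscale_minus_left)
  ultimately have "cstar (u + cscale c v) * (u + cscale c v) = cstar y * bop_apply (a * a + k * k) y"
    unfolding cstar_add_cscale_times_self cross squares
    by (simp add: cscale_one distrib_left add.assoc)
  then have "norm (u + cscale c v) ^ 2 = norm (cstar y * bop_apply (a * a + k * k) y)"
    by (simp flip: cstar_identity)
  also have "\<dots> \<le> norm (cstar y) * norm (bop_apply (a * a + k * k) y)"
    by (rule norm_mult_ineq)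
  also have "\<dots> \<le> norm y * (norm (a * a + k * k) * norm y)"
    using norm_bop_apply[of "a * a + k * k" y] by (simp del: bop_apply_add add: mult_left_mono)
  also have "\<dots> = norm (a * a + k * k) * norm y ^ 2"
    by (simp add: power2_eq_square)
  finally show ?thesis unfolding u_def v_def .
qed

lemma norm_sq_le_norm_add_squares:
  fixes a k :: "'a::cstar_algebra bop"
  assumes a: "hermitian a" and k: "hermitian k" and comm: "a * k = k * a"
  shows "norm a ^ 2 \<le> norm (a * a + k * k)"
proof -
  define D where "D = a * a + k * k"
  have "norm (bop_apply a y) \<le> sqrt (norm D) * norm y" for y
  proof -
    define u where "u = bop_apply a y"
    define v where "v = bop_apply k y"
    have est: "norm (u + cscale c v) \<le> sqrt (norm D) * norm y" if "c = \<i> \<or> c = - \<i>" for c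
    proof (rule power2_le_imp_le)
      show "norm (u + cscale c v) ^ 2 \<le> (sqrt (norm D) * norm y) ^ 2"
        using norm_add_cscale_apply_sq_le[OF a k comm that, of y]
        by (simp add: u_def v_def D_def power_mult_distrib)
    qed simp
    have "2 *\<^sub>R u = (u + cscale \<i> v) + (u + cscale (- \<i>) v)"
      by (simp add: cscale_minus_left scaleR_2)
    then have "norm (2 *\<^sub>R u) \<le> norm (u + cscale \<i> v) + norm (u + cscale (- \<i>) v)"
      by (simp only: norm_triangle_ineq)
    then show ?thesis using est[of \<i>] est[of "- \<i>"] by (simp add: u_def)
  qed
  then have "norm a \<le> sqrt (norm D)"
    by (intro norm_bop_bound) (auto simp: mult.commute)
  then have "norm a ^ 2 \<le> sqrt (norm D) ^ 2" by (intro power_mono) auto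
  then show ?thesis unfolding D_def by simp
qed

lemma hermitian_norm_sq_le: "hermitian a \<Longrightarrow> norm a ^ 2 \<le> norm (a * a)"
  using norm_sq_le_norm_add_squares[of a 0] by (simp add: hermitian_zero)

section \<open>A power series for \<open>\<surd>(1 - T)\<close>\<close>

text \<open>The coefficients \<open>c\<^sub>n\<close> of \<open>1 - \<surd>(1 - x) = \<Sum> c\<^sub>n x\<^sup>n\<close>: comparing coefficients in
  \<open>(1 - \<Sum> c\<^sub>n x\<^sup>n)\<^sup>2 = 1 - x\<close> gives \<open>c\<^sub>1 = 1/2\<close> and
  \<open>2 c\<^sub>n = \<Sum>\<^bsub>0<i<n\<^esub> c\<^sub>i c\<^bsub>n-i\<^esub>\<close> for \<open>n \<ge> 2\<close>.\<close>

fun sqrt_coeff :: "nat \<Rightarrow> real" where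
  "sqrt_coeff 0 = 0"
| "sqrt_coeff (Suc 0) = 1 / 2"
| "sqrt_coeff n = (\<Sum>i\<in>{1..<n}. sqrt_coeff i * sqrt_coeff (n - i)) / 2"

lemma sqrt_coeff_nonneg: "sqrt_coeff n \<ge> 0"
  by (induction n rule: sqrt_coeff.induct)
    (simp_all only: sqrt_coeff.simps,
      (intro divide_nonneg_nonneg sum_nonneg mult_nonneg_nonneg; simp))

lemma sqrt_coeff_convolution:
  "(\<Sum>i\<le>n. sqrt_coeff i * sqrt_coeff (n - i)) + (if n = 1 then 1 else 0) = 2 * sqrt_coeff n"
proof (cases "n \<ge> 2")
  case True
  have "(\<Sum>i\<le>n. sqrt_coeff i * sqrt_coeff (n - i)) = (\<Sum>i\<in>{1..<n}. sqrt_coeff i * sqrt_coeff (n - i))"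
  proof (rule sum.mono_neutral_right)
    show "\<forall>i\<in>{..n} - {1..<n}. sqrt_coeff i * sqrt_coeff (n - i) = 0"
      by (auto simp: not_less_eq_eq le_Suc_eq)
  qed auto
  moreover obtain m where "n = Suc (Suc m)" using True by (metis add_2_eq_Suc le_Suc_ex)
  ultimately show ?thesis by simp
next
  case False
  then have "n = 0 \<or> n = 1" by auto
  then show ?thesis by auto
qed

lemma sqrt_coeff_partial_sum_le: "(\<Sum>n<N. sqrt_coeff n) \<le> 1"
proof (induction N)
  case (Suc N)
  define s where "s = (\<Sum>n<N. sqrt_coeff n)"
  have zero_index: "i = 0 \<or> j = 0" if "i + j < Suc N" "\<not> (i < N \<and> j < N)" for i j
    using that by arith
  have "(\<Sum>n<Suc N. (\<Sum>i\<le>n. sqrt_coeff i * sqrt_coeff (n - i)))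
      = (\<Sum>(i, j)\<in>{(i, j). i + j < Suc N}. sqrt_coeff i * sqrt_coeff j)"
    by (rule sum.triangle_reindex[symmetric])
  also have "\<dots> = (\<Sum>(i, j)\<in>{(i, j). i + j < Suc N} \<inter> ({..<N} \<times> {..<N}). sqrt_coeff i * sqrt_coeff j)"
    by (rule sum.mono_neutral_right)
      (auto intro: finite_subset[of _ "{..N} \<times> {..N}"] dest: zero_index)
  also have "\<dots> \<le> (\<Sum>(i, j)\<in>{..<N} \<times> {..<N}. sqrt_coeff i * sqrt_coeff j)"
    by (rule sum_mono2) (auto simp: sqrt_coeff_nonneg)
  also have "\<dots> = s * s"
    unfolding s_def sum_product sum.cartesian_product by simp
  also have "\<dots> \<le> 1"
    using Suc.IH by (simp add: s_def mult_le_one sum_nonneg sqrt_coeff_nonneg)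
  finally have conv: "(\<Sum>n<Suc N. (\<Sum>i\<le>n. sqrt_coeff i * sqrt_coeff (n - i))) \<le> 1" .
  have delta: "(\<Sum>n<Suc N. (if n = 1 then 1 else 0::real)) \<le> 1"
    by (simp add: sum.delta)
  have "2 * (\<Sum>n<Suc N. sqrt_coeff n)
      = (\<Sum>n<Suc N. (\<Sum>i\<le>n. sqrt_coeff i * sqrt_coeff (n - i)) + (if n = 1 then 1 else 0))"
    by (simp only: sum_distrib_left sqrt_coeff_convolution)
  also have "\<dots> = (\<Sum>n<Suc N. (\<Sum>i\<le>n. sqrt_coeff i * sqrt_coeff (n - i)))
      + (\<Sum>n<Suc N. (if n = 1 then 1 else 0))"
    by (rule sum.distrib)
  finally show ?case using conv delta by linarith
qed simp

lemma summable_sqrt_coeff: "summable sqrt_coeff"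
  by (rule bounded_imp_summable[where B = 1])
    (use sqrt_coeff_partial_sum_le[of "Suc _"] in \<open>auto simp: sqrt_coeff_nonneg lessThan_Suc_atMost\<close>)

definition sqrt_one_minus :: "'a::banach bop \<Rightarrow> 'a bop" where
  "sqrt_one_minus T = 1 - (\<Sum>n. sqrt_coeff n *\<^sub>R T ^ n)"

context
  fixes T :: "'a::banach bop"
  assumes norm_T: "norm T \<le> 1"
begin

lemma summable_norm_sqrt_series: "summable (\<lambda>n. norm (sqrt_coeff n *\<^sub>R T ^ n))"
proof (rule summable_comparison_test[OF _ summable_sqrt_coeff])
  show "\<exists>N. \<forall>n\<ge>N. norm (norm (sqrt_coeff n *\<^sub>R T ^ n)) \<le> sqrt_coeff n"
    using norm_power_bop_le_one[OF norm_T] by (auto simp: sqrt_coeff_nonneg mult_left_le)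
qed

lemma summable_sqrt_series: "summable (\<lambda>n. sqrt_coeff n *\<^sub>R T ^ n)"
  by (rule summable_norm_cancel[OF summable_norm_sqrt_series])

lemma sqrt_one_minus_squared: "sqrt_one_minus T * sqrt_one_minus T = 1 - T"
proof -
  define S where "S = (\<Sum>n. sqrt_coeff n *\<^sub>R T ^ n)"
  have S: "(\<lambda>n. sqrt_coeff n *\<^sub>R T ^ n) sums S"
    unfolding S_def by (rule summable_sums[OF summable_sqrt_series])
  have "(\<lambda>k. \<Sum>i\<le>k. (sqrt_coeff i *\<^sub>R T ^ i) * (sqrt_coeff (k - i) *\<^sub>R T ^ (k - i))) sums (S * S)"
    using Cauchy_product_sums[OF summable_norm_sqrt_series summable_norm_sqrt_series]
    by (simp add: sums_unique[OF S])
  moreover have "(\<Sum>i\<le>k. (sqrt_coeff i *\<^sub>R T ^ i) * (sqrt_coeff (k - i) *\<^sub>R T ^ (k - i)))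
      = (\<Sum>i\<le>k. sqrt_coeff i * sqrt_coeff (k - i)) *\<^sub>R T ^ k" for k
    by (auto simp: scaleR_sum_left simp flip: power_add intro!: sum.cong)
  ultimately have square: "(\<lambda>k. (\<Sum>i\<le>k. sqrt_coeff i * sqrt_coeff (k - i)) *\<^sub>R T ^ k) sums (S * S)"
    by simp
  have "(\<lambda>k. (2 * sqrt_coeff k) *\<^sub>R T ^ k - (\<Sum>i\<le>k. sqrt_coeff i * sqrt_coeff (k - i)) *\<^sub>R T ^ k)
      sums (2 *\<^sub>R S - S * S)"
    using sums_diff[OF sums_scaleR_right[OF S, of 2] square] by (simp add: scaleR_scaleR)
  moreover have "(\<lambda>k. (2 * sqrt_coeff k) *\<^sub>R T ^ k - (\<Sum>i\<le>k. sqrt_coeff i * sqrt_coeff (k - i)) *\<^sub>R T ^ k)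
      = (\<lambda>k. if k = 1 then T ^ k else 0)"
    by (auto simp flip: sqrt_coeff_convolution scaleR_diff_left)
  ultimately have "2 *\<^sub>R S - S * S = T"
    using sums_single[of 1 "\<lambda>k. T ^ k"] sums_unique2 by fastforce
  then show ?thesis
    unfolding sqrt_one_minus_def S_def[symmetric] by (simp add: algebra_simps scaleR_2)
qed

lemma sqrt_one_minus_commute:
  assumes "U * T = T * U"
  shows "U * sqrt_one_minus T = sqrt_one_minus T * U"
proof -
  have "U * (\<Sum>n. sqrt_coeff n *\<^sub>R T ^ n) = (\<Sum>n. U * (sqrt_coeff n *\<^sub>R T ^ n))"
    by (rule suminf_mult[OF summable_sqrt_series, symmetric])
  also have "\<dots> = (\<Sum>n. (sqrt_coeff n *\<^sub>R T ^ n) * U)"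
    using power_commuting_commutes[OF assms[symmetric]] by simp
  also have "\<dots> = (\<Sum>n. sqrt_coeff n *\<^sub>R T ^ n) * U"
    by (rule suminf_mult2[OF summable_sqrt_series, symmetric])
  finally show ?thesis
    unfolding sqrt_one_minus_def by (simp add: algebra_simps)
qed

end

lemma hermitian_sqrt_one_minus:
  fixes T :: "'a::cstar_algebra bop"
  assumes "norm T \<le> 1" "hermitian T"
  shows "hermitian (sqrt_one_minus T)"
  unfolding sqrt_one_minus_def
  by (intro hermitian_diff hermitian_one hermitian_suminf summable_sqrt_series assms
      hermitian_scaleR hermitian_power)

section \<open>Positivity without functional calculus\<close>

text \<open>The hermitian operators commuting with the commutant of \<open>H\<close> form a commutative
  algebra that contains \<open>H\<close> and is closed under \<open>sqrt_one_minus\<close>; it stands in for the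
  C*-algebra generated by \<open>H\<close>.\<close>

definition herm_bicomm :: "'a::cstar_algebra bop \<Rightarrow> 'a bop set" where
  "herm_bicomm H = {T. hermitian T \<and> (\<forall>U. U * H = H * U \<longrightarrow> U * T = T * U)}"

lemma herm_bicommI:
  "hermitian T \<Longrightarrow> (\<And>U. U * H = H * U \<Longrightarrow> U * T = T * U) \<Longrightarrow> T \<in> herm_bicomm H"
  unfolding herm_bicomm_def by blast

lemma herm_bicomm_hermitian: "T \<in> herm_bicomm H \<Longrightarrow> hermitian T"
  unfolding herm_bicomm_def by blast

lemma herm_bicommD: "T \<in> herm_bicomm H \<Longrightarrow> U * H = H * U \<Longrightarrow> U * T = T * U"
  unfolding herm_bicomm_def by blast

lemma herm_bicomm_self: "hermitian H \<Longrightarrow> H \<in> herm_bicomm H"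
  by (rule herm_bicommI) auto

lemma herm_bicomm_commute: "S \<in> herm_bicomm H \<Longrightarrow> T \<in> herm_bicomm H \<Longrightarrow> S * T = T * S"
  using herm_bicommD[of T H H] herm_bicommD[of S H T] by simp

lemma herm_bicomm_one: "1 \<in> herm_bicomm H"
  by (rule herm_bicommI) (auto simp: hermitian_one)

lemma herm_bicomm_add: "S \<in> herm_bicomm H \<Longrightarrow> T \<in> herm_bicomm H \<Longrightarrow> S + T \<in> herm_bicomm H"
  by (rule herm_bicommI)
    (auto simp: hermitian_add herm_bicomm_hermitian distrib_left distrib_right
      herm_bicommD[of S H] herm_bicommD[of T H])

lemma herm_bicomm_diff: "S \<in> herm_bicomm H \<Longrightarrow> T \<in> herm_bicomm H \<Longrightarrow> S - T \<in> herm_bicomm H"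
  by (rule herm_bicommI)
    (auto simp: hermitian_diff herm_bicomm_hermitian left_diff_distrib right_diff_distrib
      herm_bicommD[of S H] herm_bicommD[of T H])

lemma herm_bicomm_scaleR: "T \<in> herm_bicomm H \<Longrightarrow> r *\<^sub>R T \<in> herm_bicomm H"
  by (rule herm_bicommI) (auto simp: hermitian_scaleR herm_bicomm_hermitian herm_bicommD[of T H])

lemma herm_bicomm_mult: "S \<in> herm_bicomm H \<Longrightarrow> T \<in> herm_bicomm H \<Longrightarrow> S * T \<in> herm_bicomm H"
proof (rule herm_bicommI)
  assume S: "S \<in> herm_bicomm H" and T: "T \<in> herm_bicomm H"
  show "hermitian (S * T)"
    using S T by (simp add: hermitian_mult herm_bicomm_hermitian herm_bicomm_commute)
  fix U assume "U * H = H * U"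
  then have "U * S = S * U" "U * T = T * U" using S T herm_bicommD by blast+
  then show "U * (S * T) = S * T * U" by (metis mult.assoc)
qed

lemma herm_bicomm_power: "T \<in> herm_bicomm H \<Longrightarrow> T ^ n \<in> herm_bicomm H"
  by (induction n) (auto simp: herm_bicomm_one herm_bicomm_mult)

lemma herm_bicomm_sqrt_one_minus:
  "T \<in> herm_bicomm H \<Longrightarrow> norm T \<le> 1 \<Longrightarrow> sqrt_one_minus T \<in> herm_bicomm H"
  by (rule herm_bicommI)
    (auto simp: hermitian_sqrt_one_minus herm_bicomm_hermitian
      intro: sqrt_one_minus_commute herm_bicommD)

lemma norm_sqrt_one_minus_square_le_one:
  assumes k: "k \<in> herm_bicomm H" and norm_kk: "norm (k * k) \<le> 1"
  shows "norm (sqrt_one_minus (k * k)) \<le> 1"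
proof -
  define R where "R = sqrt_one_minus (k * k)"
  have R: "R \<in> herm_bicomm H"
    unfolding R_def by (intro herm_bicomm_sqrt_one_minus herm_bicomm_mult k norm_kk)
  have "norm R ^ 2 \<le> norm (R * R + k * k)"
    by (rule norm_sq_le_norm_add_squares)
      (auto intro: herm_bicomm_hermitian herm_bicomm_commute R k)
  also have "R * R + k * k = 1"
    unfolding R_def sqrt_one_minus_squared[OF norm_kk] by simp
  finally have "norm R ^ 2 \<le> 1"
    using norm_one_bop[where 'a = 'a] by linarith
  then show ?thesis
    unfolding R_def[symmetric] using power2_le_imp_le[of "norm R" 1] by simp
qed

lemma norm_one_minus_square_le_one:
  assumes "k \<in> herm_bicomm H" "norm (k * k) \<le> 1"
  shows "norm (1 - k * k) \<le> 1"
proof -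
  have "norm (1 - k * k) \<le> norm (sqrt_one_minus (k * k)) * norm (sqrt_one_minus (k * k))"
    using norm_mult_ineq by (metis sqrt_one_minus_squared[OF assms(2)])
  also have "\<dots> \<le> 1"
    using norm_sqrt_one_minus_square_le_one[OF assms] by (simp add: mult_le_one)
  finally show ?thesis .
qed

definition positive_in :: "'a::cstar_algebra bop \<Rightarrow> 'a bop \<Rightarrow> bool" where
  "positive_in H P \<longleftrightarrow> (\<exists>r\<in>herm_bicomm H. P = r * r)"

lemma positive_in_square: "r \<in> herm_bicomm H \<Longrightarrow> positive_in H (r * r)"
  unfolding positive_in_def by blast

lemma positive_in_zero: "positive_in H 0"
  using positive_in_square[OF herm_bicomm_scaleR[OF herm_bicomm_one, of 0]] by simp

lemma positive_in_mult: "positive_in H P \<Longrightarrow> positive_in H Q \<Longrightarrow> positive_in H (P * Q)"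
proof -
  assume "positive_in H P" "positive_in H Q"
  then obtain p q where p: "p \<in> herm_bicomm H" "P = p * p" and q: "q \<in> herm_bicomm H" "Q = q * q"
    unfolding positive_in_def by blast
  have "P * Q = (p * q) * (p * q)"
    using p(2) q(2) herm_bicomm_commute[OF p(1) q(1)] by (metis mult.assoc)
  then show ?thesis using positive_in_square[OF herm_bicomm_mult[OF p(1) q(1)]] by simp
qed

lemma positive_in_scaleR: "0 \<le> c \<Longrightarrow> positive_in H P \<Longrightarrow> positive_in H (c *\<^sub>R P)"
proof -
  assume "0 \<le> c" "positive_in H P"
  then obtain p where p: "p \<in> herm_bicomm H" "P = p * p" unfolding positive_in_def by blast
  have "c *\<^sub>R P = (sqrt c *\<^sub>R p) * (sqrt c *\<^sub>R p)"
    using \<open>0 \<le> c\<close> p(2) by simp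
  then show ?thesis by (metis positive_in_square herm_bicomm_scaleR p(1))
qed

lemma norm_le_norm_add_positive:
  assumes "positive_in H P" "positive_in H Q"
  shows "norm P \<le> norm (P + Q)"
proof -
  obtain p q where p: "p \<in> herm_bicomm H" "P = p * p" and q: "q \<in> herm_bicomm H" "Q = q * q"
    using assms unfolding positive_in_def by blast
  have "norm P \<le> norm p ^ 2"
    using p(2) norm_mult_ineq[of p p] by (simp add: power2_eq_square)
  also have "\<dots> \<le> norm (P + Q)"
    unfolding p(2) q(2)
    by (rule norm_sq_le_norm_add_squares)
      (auto intro: herm_bicomm_hermitian herm_bicomm_commute p q)
  finally show ?thesis .
qed

lemma norm_normsq_minus_square_le:
  assumes w: "w \<in> herm_bicomm H"
  shows "norm (norm w ^ 2 *\<^sub>R 1 - w * w) \<le> norm w ^ 2"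
proof (cases "w = 0")
  case False
  define k where "k = (1 / norm w) *\<^sub>R w"
  have "norm (k * k) \<le> norm k * norm k" by (rule norm_mult_ineq)
  also have "\<dots> = 1" using False by (simp add: k_def)
  finally have "norm (1 - k * k) \<le> 1"
    by (intro norm_one_minus_square_le_one) (auto simp: k_def intro: herm_bicomm_scaleR w)
  moreover have "norm w ^ 2 *\<^sub>R 1 - w * w = norm w ^ 2 *\<^sub>R (1 - k * k)"
    using False by (simp add: k_def scaleR_diff_right power2_eq_square)
  ultimately show ?thesis by (simp add: mult_left_le)
qed simp

text \<open>\<open>p\<^sup>2 + q\<^sup>2 = K (1 - T)\<close> with \<open>K = \<parallel>p\<parallel>\<^sup>2 + \<parallel>q\<parallel>\<^sup>2\<close> and \<open>\<parallel>T\<parallel> \<le> 1\<close>,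
  so \<open>\<surd>K \<surd>(1 - T)\<close> is a square root in the algebra.\<close>

lemma positive_in_add:
  assumes "positive_in H P" "positive_in H Q"
  shows "positive_in H (P + Q)"
proof -
  obtain p q where p: "p \<in> herm_bicomm H" "P = p * p" and q: "q \<in> herm_bicomm H" "Q = q * q"
    using assms unfolding positive_in_def by blast
  define K where "K = norm p ^ 2 + norm q ^ 2"
  show ?thesis
  proof (cases "K = 0")
    case True
    then show ?thesis using p q positive_in_zero by (simp add: K_def add_nonneg_eq_0_iff)
  next
    case False
    then have K: "K > 0" unfolding K_def by (simp add: add_pos_nonneg order_le_neq_trans)
    define T where "T = (1 / K) *\<^sub>R ((norm p ^ 2 *\<^sub>R 1 - p * p) + (norm q ^ 2 *\<^sub>R 1 - q * q))"
    have T: "T \<in> herm_bicomm H"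
      unfolding T_def by (intro herm_bicomm_scaleR herm_bicomm_add herm_bicomm_diff herm_bicomm_one
          herm_bicomm_mult p(1) q(1))
    have "norm T \<le> (norm (norm p ^ 2 *\<^sub>R 1 - p * p) + norm (norm q ^ 2 *\<^sub>R 1 - q * q)) / K"
      unfolding T_def using K by (simp add: norm_triangle_ineq divide_right_mono)
    also have "\<dots> \<le> 1"
      using norm_normsq_minus_square_le[OF p(1)] norm_normsq_minus_square_le[OF q(1)] K
      by (simp add: K_def)
    finally have norm_T: "norm T \<le> 1" .
    define r where "r = sqrt K *\<^sub>R sqrt_one_minus T"
    have r: "r \<in> herm_bicomm H"
      unfolding r_def by (intro herm_bicomm_scaleR herm_bicomm_sqrt_one_minus T norm_T)
    have "r * r = K *\<^sub>R 1 - K *\<^sub>R T"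
      unfolding r_def using sqrt_one_minus_squared[OF norm_T] K by (simp add: scaleR_diff_right)
    also have "\<dots> = P + Q"
      using K by (simp add: T_def p(2) q(2)) (simp add: K_def algebra_simps)
    finally have "r * r = P + Q" .
    with r show ?thesis unfolding positive_in_def by metis
  qed
qed

lemma positive_in_sum: "(\<And>i. i \<in> S \<Longrightarrow> positive_in H (f i)) \<Longrightarrow> positive_in H (sum f S)"
  by (induction S rule: infinite_finite_induct) (auto simp: positive_in_zero positive_in_add)

lemma norm_le_norm_sum_decreasing_positive:
  assumes pos: "\<And>j. positive_in H (P j)"
    and decr: "\<And>j. j \<le> J \<Longrightarrow> positive_in H (P j - P J)"
  shows "real (Suc J) * norm (P J) \<le> norm (\<Sum>j<Suc J. P j)"
proof -
  have "(\<Sum>j<Suc J. P j) = (\<Sum>j<Suc J. P J + (P j - P J))" by simp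
  also have "\<dots> = real (Suc J) *\<^sub>R P J + (\<Sum>j<Suc J. P j - P J)"
    by (simp only: sum.distrib sum_constant_scaleR card_lessThan)
  finally have "(\<Sum>j<Suc J. P j) = real (Suc J) *\<^sub>R P J + (\<Sum>j<Suc J. P j - P J)" .
  moreover have "norm (real (Suc J) *\<^sub>R P J) \<le> norm (real (Suc J) *\<^sub>R P J + (\<Sum>j<Suc J. P j - P J))"
    by (intro norm_le_norm_add_positive[where H = H] positive_in_scaleR positive_in_sum pos decr)
      auto
  ultimately show ?thesis by simp
qed

lemma positive_in_square_times_power:
  fixes H :: "'a::cstar_algebra bop"
  assumes herm: "hermitian H" and norm_H: "norm H \<le> 1"
  shows "positive_in H (H * H * (1 - H * H) ^ j)"
proof -
  have H: "H \<in> herm_bicomm H" by (rule herm_bicomm_self[OF herm])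
  have norm_HH: "norm (H * H) \<le> 1"
    using norm_mult_ineq[of H H] norm_H by (meson mult_le_one norm_ge_zero order_trans)
  define C where "C = sqrt_one_minus (H * H)"
  have C: "C \<in> herm_bicomm H"
    unfolding C_def by (intro herm_bicomm_sqrt_one_minus herm_bicomm_mult H norm_HH)
  have "(H * C ^ j) * (H * C ^ j) = H * (C ^ j * H) * C ^ j"
    by (simp only: mult.assoc)
  also have "C ^ j * H = H * C ^ j"
    by (rule herm_bicomm_commute[OF herm_bicomm_power[OF C] H])
  also have "H * (H * C ^ j) * C ^ j = H * H * (C ^ j * C ^ j)"
    by (simp only: mult.assoc)
  also have "C ^ j * C ^ j = (1 - H * H) ^ j"
    using sqrt_one_minus_squared[OF norm_HH]
    by (simp add: C_def power_mult power2_eq_square flip: power_add mult_2)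
  finally show ?thesis
    by (metis positive_in_square herm_bicomm_mult herm_bicomm_power H C)
qed

lemma norm_square_times_power_le:
  fixes H :: "'a::cstar_algebra bop"
  assumes herm: "hermitian H" and norm_H: "norm H \<le> 1"
  shows "real (Suc n) * norm (H * H * (1 - H * H) ^ n) \<le> 2"
proof -
  define X where "X = 1 - H * H"
  define P where "P j = H * H * X ^ j" for j
  have P_pos: "positive_in H (P j)" for j
    unfolding P_def X_def by (rule positive_in_square_times_power[OF herm norm_H])
  have telescope: "(\<Sum>j<m. P j) = 1 - X ^ m" for m
  proof (induction m)
    case (Suc m)
    have "(\<Sum>j<Suc m. P j) = 1 - X ^ m + H * H * X ^ m"
      using Suc by (simp add: P_def)
    also have "H * H = 1 - X" by (simp add: X_def)
    finally show ?case by (simp add: algebra_simps)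
  qed simp
  have decr: "positive_in H (P j - P n)" if "j \<le> n" for j
  proof -
    have "P j - P n = P j * (1 - X ^ (n - j))"
      using that by (simp add: P_def algebra_simps mult.assoc flip: power_add)
    moreover have "positive_in H (1 - X ^ (n - j))"
      unfolding telescope[symmetric] by (intro positive_in_sum P_pos)
    ultimately show ?thesis using positive_in_mult[OF P_pos] by simp
  qed
  have "norm (H * H) \<le> 1"
    using norm_mult_ineq[of H H] norm_H by (meson mult_le_one norm_ge_zero order_trans)
  then have norm_X: "norm X \<le> 1"
    unfolding X_def by (rule norm_one_minus_square_le_one[OF herm_bicomm_self[OF herm]])
  have "real (Suc n) * norm (P n) \<le> norm (1 - X ^ Suc n)"
    using norm_le_norm_sum_decreasing_positive[of H P n, OF P_pos decr] by (simp only: telescope)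
  also have "\<dots> \<le> norm (1::'a bop) + norm (X ^ Suc n)" by (rule norm_triangle_ineq4)
  also have "\<dots> \<le> 2"
    using norm_one_bop[where 'a = 'a] norm_power_bop_le_one[OF norm_X, of "Suc n"] by linarith
  finally show ?thesis by (simp add: P_def X_def)
qed

lemma norm_times_power_sq_le:
  fixes H :: "'a::cstar_algebra bop"
  assumes herm: "hermitian H" and norm_H: "norm H \<le> 1"
  shows "norm (H * (1 - H * H) ^ n) ^ 2 \<le> 2 / (2 * real n + 1)"
proof -
  have H: "H \<in> herm_bicomm H" by (rule herm_bicomm_self[OF herm])
  define a where "a = H * (1 - H * H) ^ n"
  have a: "a \<in> herm_bicomm H"
    unfolding a_def by (intro herm_bicomm_mult herm_bicomm_power herm_bicomm_diff herm_bicomm_one H)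
  have "a * a = H * ((1 - H * H) ^ n * H) * (1 - H * H) ^ n"
    by (simp only: a_def mult.assoc)
  also have "(1 - H * H) ^ n * H = H * (1 - H * H) ^ n"
    by (intro herm_bicomm_commute[OF _ H] herm_bicomm_power herm_bicomm_diff herm_bicomm_one
        herm_bicomm_mult H)
  finally have "a * a = H * H * ((1 - H * H) ^ n * (1 - H * H) ^ n)"
    by (simp only: mult.assoc)
  then have "a * a = H * H * (1 - H * H) ^ (2 * n)"
    by (simp add: mult_2 power_add)
  then have "(2 * n + 1) * norm (a * a) \<le> 2"
    using norm_square_times_power_le[OF herm norm_H, of "2 * n"] by simp
  moreover have "(2 * n + 1) * norm a ^ 2 \<le> (2 * n + 1) * norm (a * a)"
    by (intro mult_left_mono hermitian_norm_sq_le herm_bicomm_hermitian[OF a]) simp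
  ultimately show ?thesis
    unfolding a_def[symmetric] by (simp add: field_simps)
qed

lemma csubspace_zero: "csubspace V \<Longrightarrow> 0 \<in> V"
  unfolding csubspace_def by blast

lemma csubspace_add: "csubspace V \<Longrightarrow> x \<in> V \<Longrightarrow> y \<in> V \<Longrightarrow> x + y \<in> V"
  unfolding csubspace_def by blast

lemma csubspace_scaleR: "csubspace V \<Longrightarrow> x \<in> V \<Longrightarrow> r *\<^sub>R x \<in> V"
  unfolding csubspace_def by (metis cscale_of_real)

lemma clin_span_superset: "S \<subseteq> clin_span S"
proof
  fix s assume "s \<in> S"
  then show "s \<in> clin_span S"
    unfolding clin_span_def by (intro CollectI exI[of _ "{s}"] exI[of _ "\<lambda>_. 1"]) (auto simp: cscale_one)
qed

lemma csubspace_clin_span: "csubspace (clin_span S)"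
  unfolding csubspace_def
proof (intro conjI ballI allI)
  show "0 \<in> clin_span S"
    unfolding clin_span_def by (intro CollectI exI[of _ "{}"]) auto
next
  fix c and x assume "x \<in> clin_span S"
  then obtain F a where F: "finite F" "F \<subseteq> S" "x = (\<Sum>s\<in>F. cscale (a s) s)"
    unfolding clin_span_def by blast
  have "cscale c x = (\<Sum>s\<in>F. cscale (c * a s) s)"
    unfolding F(3) by (induction F rule: infinite_finite_induct) (auto simp: cscale_add_right cscale_cscale)
  with F show "cscale c x \<in> clin_span S"
    unfolding clin_span_def by (intro CollectI exI[of _ F] exI[of _ "\<lambda>s. c * a s"]) simp
next
  fix x y assume "x \<in> clin_span S" "y \<in> clin_span S"
  then obtain F a G b where F: "finite F" "F \<subseteq> S" "x = (\<Sum>s\<in>F. cscale (a s) s)"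
    and G: "finite G" "G \<subseteq> S" "y = (\<Sum>s\<in>G. cscale (b s) s)"
    unfolding clin_span_def by blast
  define a' where "a' s = (if s \<in> F then a s else 0)" for s
  define b' where "b' s = (if s \<in> G then b s else 0)" for s
  have "x = (\<Sum>s\<in>F \<union> G. cscale (a' s) s)"
    unfolding F(3) by (rule sum.mono_neutral_cong_left) (auto simp: F G a'_def)
  moreover have "y = (\<Sum>s\<in>F \<union> G. cscale (b' s) s)"
    unfolding G(3) by (rule sum.mono_neutral_cong_left) (auto simp: F G b'_def)
  ultimately have "x + y = (\<Sum>s\<in>F \<union> G. cscale (a' s + b' s) s)"
    by (simp add: cscale_add_left sum.distrib)
  with F G show "x + y \<in> clin_span S"
    unfolding clin_span_def by (intro CollectI exI[of _ "F \<union> G"] exI[of _ "\<lambda>s. a' s + b' s"]) simp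
qed

lemma clin_span_minimal: "csubspace V \<Longrightarrow> S \<subseteq> V \<Longrightarrow> clin_span S \<subseteq> V"
proof
  fix x assume V: "csubspace V" and "S \<subseteq> V" and "x \<in> clin_span S"
  then obtain F a where "finite F" "F \<subseteq> V" "x = (\<Sum>s\<in>F. cscale (a s) s)"
    unfolding clin_span_def by blast
  then show "x \<in> V"
    using V unfolding csubspace_def by (induction F arbitrary: x rule: finite_induct) auto
qed

lemma csubspace_closure:
  fixes V :: "'a::cstar_algebra set"
  assumes "csubspace V"
  shows "csubspace (closure V)"
  unfolding csubspace_def
proof (intro conjI ballI allI)
  show "0 \<in> closure V" using assms closure_subset unfolding csubspace_def by blast
next
  fix x y assume "x \<in> closure V" "y \<in> closure V"
  then obtain xs ys where "\<forall>n. xs n \<in> V" "xs \<longlonglongrightarrow> x" "\<forall>n. ys n \<in> V" "ys \<longlonglongrightarrow> y"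
    unfolding closure_sequential by blast
  then show "x + y \<in> closure V"
    using assms unfolding csubspace_def closure_sequential
    by (intro exI[of _ "\<lambda>n. xs n + ys n"]) (auto intro: tendsto_add)
next
  fix c x assume "x \<in> closure V"
  then obtain xs where "\<forall>n. xs n \<in> V" "xs \<longlonglongrightarrow> x"
    unfolding closure_sequential by blast
  then show "cscale c x \<in> closure V"
    using assms bounded_linear.tendsto[OF bounded_linear_cscale] unfolding csubspace_def closure_sequential
    by (intro exI[of _ "\<lambda>n. cscale c (xs n)"]) auto
qed

lemma csubspace_clspan: "csubspace (clspan S)"
  unfolding clspan_def by (intro csubspace_closure csubspace_clin_span)

lemma closed_clspan: "closed (clspan S)"
  unfolding clspan_def by simp

lemma clspan_superset: "S \<subseteq> clspan S"
  unfolding clspan_def using clin_span_superset closure_subset by blast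

lemma clspan_minimal: "csubspace V \<Longrightarrow> closed V \<Longrightarrow> S \<subseteq> V \<Longrightarrow> clspan S \<subseteq> V"
  unfolding clspan_def by (intro closure_minimal clin_span_minimal)

text \<open>Covers complex-linear and conjugate-linear maps alike.\<close>

lemma csubspace_vimage:
  assumes "csubspace V" "f 0 = 0" "\<And>x y. f (x + y) = f x + f y"
    and "\<And>c x. f (cscale c x) = cscale (\<sigma> c) (f x)"
  shows "csubspace (f -` V)"
  using assms unfolding csubspace_def by auto

lemma clspan_subset_vimage:
  fixes f :: "'a::cstar_algebra \<Rightarrow> 'a"
  assumes "continuous_on UNIV f" "f 0 = 0" "\<And>x y. f (x + y) = f x + f y"
    and "\<And>c x. f (cscale c x) = cscale (\<sigma> c) (f x)" and "f ` S \<subseteq> clspan T"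
  shows "f ` clspan S \<subseteq> clspan T"
proof -
  have "clspan S \<subseteq> f -` clspan T"
    using assms by (intro clspan_minimal csubspace_vimage[where \<sigma> = \<sigma>] csubspace_clspan
        closed_vimage closed_clspan) auto
  then show ?thesis by blast
qed

section \<open>Every element lies in the closed left ideal generated by \<open>(z\<^sup>* z)\<^sup>2\<close>\<close>

lift_definition lmult :: "'a::real_normed_algebra \<Rightarrow> 'a bop" is blinfun_mult_right .

lemma bop_apply_lmult [simp]: "bop_apply (lmult x) y = x * y"
  by transfer simp

lemma lmult_mult: "lmult (x * y) = lmult x * lmult y"
  by (rule bop_eqI) (simp add: mult.assoc)

lemma lmult_add: "lmult (x + y) = lmult x + lmult y"
  by (rule bop_eqI) (simp add: distrib_right)

lemma lmult_diff: "lmult (x - y) = lmult x - lmult y"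
  by (rule bop_eqI) (simp add: left_diff_distrib)

lemma lmult_scaleR: "lmult (r *\<^sub>R x) = r *\<^sub>R lmult x"
  by (rule bop_eqI) simp

lemma norm_lmult: "norm (lmult x) = norm (x::'a::cstar_algebra)"
proof (rule antisym)
  show "norm (lmult x) \<le> norm x"
    by (rule norm_bop_bound) (auto simp: norm_mult_ineq)
  show "norm x \<le> norm (lmult x)"
  proof (cases "x = 0")
    case False
    have "norm x * norm x = norm (x * cstar x)"
      using cstar_identity[of "cstar x"] by (simp add: cstar_cstar power2_eq_square)
    also have "\<dots> \<le> norm (lmult x) * norm x"
      using norm_bop_apply[of "lmult x" "cstar x"] by simp
    finally show ?thesis using False by simp
  qed simp
qed

lemma hermitian_lmult: "cstar x = x \<Longrightarrow> hermitian (lmult x)"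
  unfolding hermitian_def by (simp add: cstar_mult mult.assoc)

text \<open>The iteration \<open>w \<mapsto> w - w q\<close> computes \<open>z (1 - q)\<^sup>n\<close> without a unit in the algebra.\<close>

lemma lmult_cstar_iterate:
  fixes z :: "'a::cstar_algebra" and M :: real
  defines "t \<equiv> cstar z * z"
  defines "q \<equiv> (1 / M\<^sup>2) *\<^sub>R (t * t)" and "T \<equiv> (1 / M) *\<^sub>R lmult t"
  defines "g \<equiv> \<lambda>n. ((\<lambda>w. w - w * q) ^^ n) z"
  assumes M: "M \<noteq> 0"
  shows "lmult (cstar (g n) * g n) = M *\<^sub>R (T * (1 - T * T) ^ (2 * n))"
proof (induction n)
  case 0
  show ?case using M by (simp add: g_def T_def t_def)
next
  case (Suc n)
  have "cstar t = t" by (simp add: t_def cstar_mult cstar_cstar)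
  then have "cstar q = q" by (simp add: q_def cstar_scaleR cstar_mult)
  then have "cstar (g (Suc n)) * g (Suc n)
      = cstar (g n) * g n - cstar (g n) * g n * q - q * (cstar (g n) * g n)
        + q * (cstar (g n) * g n) * q"
    by (simp add: g_def cstar_diff cstar_mult algebra_simps)
  moreover have "lmult q = T * T"
    using M by (simp add: q_def T_def lmult_scaleR lmult_mult power2_eq_square)
  moreover define F where "F = M *\<^sub>R (T * (1 - T * T) ^ (2 * n))"
  ultimately have "lmult (cstar (g (Suc n)) * g (Suc n))
      = F - F * (T * T) - (T * T) * F + (T * T) * F * (T * T)"
    using Suc.IH by (simp add: lmult_add lmult_diff lmult_mult)
  also have "\<dots> = F * (1 - T * T) * (1 - T * T)"
  proof -
    have "hermitian T"
      unfolding T_def by (intro hermitian_scaleR hermitian_lmult) (simp add: t_def cstar_mult cstar_cstar)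
    then have "F * (T * T) = (T * T) * F"
      unfolding F_def
      by (intro herm_bicomm_commute[of _ T] herm_bicomm_scaleR herm_bicomm_mult herm_bicomm_power
          herm_bicomm_diff herm_bicomm_one herm_bicomm_self)
    then show ?thesis by (simp add: algebra_simps)
  qed
  also have "\<dots> = M *\<^sub>R (T * (1 - T * T) ^ (2 * Suc n))"
    by (simp add: F_def mult.assoc flip: power_Suc2)
  finally show ?case .
qed

lemma norm_iterate_le:
  fixes z :: "'a::cstar_algebra" and M :: real
  defines "t \<equiv> cstar z * z"
  defines "q \<equiv> (1 / M\<^sup>2) *\<^sub>R (t * t)"
  assumes M: "norm t \<le> M" "0 < M"
  shows "norm (((\<lambda>w. w - w * q) ^^ n) z) ^ 2 \<le> M * sqrt (2 / (4 * real n + 1))"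
proof -
  define T where "T \<equiv> (1 / M) *\<^sub>R lmult t"
  define g where "g = ((\<lambda>w. w - w * q) ^^ n) z"
  have herm: "hermitian T"
    unfolding T_def by (intro hermitian_scaleR hermitian_lmult) (simp add: t_def cstar_mult cstar_cstar)
  have norm_T: "norm T \<le> 1"
    using M by (simp add: T_def norm_lmult)
  have "norm g ^ 2 = norm (lmult (cstar g * g))"
    by (simp add: norm_lmult cstar_identity)
  also have "\<dots> = M * norm (T * (1 - T * T) ^ (2 * n))"
    using lmult_cstar_iterate[where z = z and M = M and n = n] M by (simp add: g_def q_def T_def t_def)
  also have "\<dots> \<le> M * sqrt (2 / (4 * real n + 1))"
    using norm_times_power_sq_le[OF herm norm_T, of "2 * n"] M
    by (intro mult_left_mono) (auto simp: real_le_rsqrt)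
  finally show ?thesis unfolding g_def .
qed

lemma iterate_tendsto_zero:
  fixes z :: "'a::cstar_algebra"
  defines "t \<equiv> cstar z * z"
  defines "M \<equiv> norm t + 1"
  shows "(\<lambda>n. ((\<lambda>w. w - w * ((1 / M\<^sup>2) *\<^sub>R (t * t))) ^^ n) z) \<longlonglongrightarrow> 0"
proof -
  define g where "g = (\<lambda>n. ((\<lambda>w. w - w * ((1 / M\<^sup>2) *\<^sub>R (t * t))) ^^ n) z)"
  have M: "norm t \<le> M" "0 < M" by (simp_all add: M_def add_nonneg_pos)
  have bound: "norm (g n) \<le> sqrt (M * sqrt (2 / real (Suc n)))" for n
  proof -
    have "norm (g n) ^ 2 \<le> M * sqrt (2 / (4 * real n + 1))"
      unfolding g_def t_def by (rule norm_iterate_le[OF M[unfolded t_def]])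
    also have "\<dots> \<le> M * sqrt (2 / real (Suc n))"
      using M by (intro mult_left_mono real_sqrt_le_mono divide_left_mono) auto
    finally show ?thesis by (simp add: real_le_rsqrt)
  qed
  have "(\<lambda>n. sqrt (M * sqrt (2 / real (Suc n)))) \<longlonglongrightarrow> 0"
    using tendsto_real_sqrt[OF tendsto_mult_left[OF tendsto_real_sqrt[OF
          LIMSEQ_Suc[OF lim_const_over_n[of 2]]], of M]]
    by simp
  then have "g \<longlonglongrightarrow> 0"
    by (rule Lim_null_comparison[OF always_eventually, rotated]) (use bound in blast)
  then show ?thesis unfolding g_def .
qed

lemma diff_iterate_mem_clin_span:
  "z - ((\<lambda>w. w - w * (r *\<^sub>R p)) ^^ n) z \<in> clin_span (setmult UNIV {p})"
proof (induction n)
  case 0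
  show ?case by (simp add: csubspace_zero[OF csubspace_clin_span])
next
  case (Suc n)
  define w where "w = ((\<lambda>w. w - w * (r *\<^sub>R p)) ^^ n) z"
  have "w * p \<in> setmult UNIV {p}"
    unfolding setmult_def by blast
  then have "w * p \<in> clin_span (setmult UNIV {p})"
    using clin_span_superset by blast
  then have "(z - w) + r *\<^sub>R (w * p) \<in> clin_span (setmult UNIV {p})"
    using Suc.IH unfolding w_def
    by (intro csubspace_add csubspace_scaleR csubspace_clin_span)
  then show ?case by (simp add: w_def algebra_simps)
qed

lemma mem_clspan_left_mult_square:
  fixes z :: "'a::cstar_algebra"
  defines "t \<equiv> cstar z * z"
  shows "z \<in> clspan (setmult UNIV {t * t})"
proof -
  define g where "g n = ((\<lambda>w. w - w * ((1 / (norm t + 1)\<^sup>2) *\<^sub>R (t * t))) ^^ n) z" for n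
  have "(\<lambda>n. z - g n) \<longlonglongrightarrow> z - 0"
    unfolding g_def t_def by (intro tendsto_diff tendsto_const iterate_tendsto_zero)
  moreover have "\<forall>n. z - g n \<in> clin_span (setmult UNIV {t * t})"
    unfolding g_def by (intro allI diff_iterate_mem_clin_span)
  ultimately show ?thesis
    unfolding clspan_def closure_sequential by auto
qed

section \<open>Normalizer-invariant ideals\<close>

lemma clspan_subset_clspan: "S \<subseteq> clspan T \<Longrightarrow> clspan S \<subseteq> clspan T"
  by (rule clspan_minimal[OF csubspace_clspan closed_clspan])

lemma cstar_image_clspan_left_mult:
  "cstar ` clspan (setmult UNIV S) \<subseteq> clspan (setmult (cstar ` S) (UNIV :: 'a::cstar_algebra set))"
proof (rule clspan_subset_vimage[where \<sigma> = cnj])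
  show "continuous_on UNIV (cstar :: 'a \<Rightarrow> 'a)"
    by (rule linear_continuous_on[OF bounded_linear_cstar])
  show "cstar ` setmult UNIV S \<subseteq> clspan (setmult (cstar ` S) UNIV)"
    using clspan_superset unfolding setmult_def by (fastforce simp: cstar_mult)
qed (simp_all add: cstar_add cstar_cscale)

lemma mem_clspan_right_mult_square:
  fixes z :: "'a::cstar_algebra"
  defines "s \<equiv> z * cstar z"
  shows "z \<in> clspan (setmult {s * s} UNIV)"
proof -
  have "cstar (s * s) = s * s" by (simp add: s_def cstar_mult cstar_cstar mult.assoc)
  moreover have "cstar z \<in> clspan (setmult UNIV {s * s})"
    using mem_clspan_left_mult_square[of "cstar z"] by (simp add: s_def cstar_cstar)
  ultimately show ?thesis
    using cstar_image_clspan_left_mult[of "{s * s}"] by (force simp: cstar_cstar)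
qed

lemma normalizer_cstar: "normalizer A n \<Longrightarrow> normalizer A (cstar n)"
  unfolding normalizer_def by (simp add: cstar_cstar)

lemma left_mult_mem_clspan_of_normalizers:
  assumes "regular_subalgebra A" "\<And>n. normalizer A n \<Longrightarrow> x * n \<in> clspan S"
  shows "x * b \<in> clspan S"
proof -
  have "(\<lambda>b. x * b) ` clspan {n. normalizer A n} \<subseteq> clspan S"
    using assms(2) by (intro clspan_subset_vimage[where \<sigma> = id])
      (auto intro: continuous_intros simp: distrib_left cscale_mult_right)
  then show ?thesis using assms(1) unfolding regular_subalgebra_def by blast
qed

lemma right_mult_mem_clspan_of_normalizers:
  assumes "regular_subalgebra A" "\<And>n. normalizer A n \<Longrightarrow> n * x \<in> clspan S"
  shows "b * x \<in> clspan S"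
proof -
  have "(\<lambda>b. b * x) ` clspan {n. normalizer A n} \<subseteq> clspan S"
    using assms(2) by (intro clspan_subset_vimage[where \<sigma> = id])
      (auto intro: continuous_intros simp: distrib_right cscale_mult_left)
  then show ?thesis using assms(1) unfolding regular_subalgebra_def by blast
qed

lemma left_mult_mem_clspan_of_invariant_ideal:
  assumes reg: "regular_subalgebra A" and I: "closed_ideal_of A I"
    and inv: "normalizer_invariant A I" and x: "x \<in> I"
  shows "x * b \<in> clspan (setmult UNIV I)"
proof (rule left_mult_mem_clspan_of_normalizers[OF reg])
  fix n assume n: "normalizer A n"
  define t where "t = cstar (x * n) * (x * n)"
  have "cstar x \<in> A" "I \<subseteq> A"
    using reg I x unfolding regular_subalgebra_def closed_star_subalgebra_def closed_ideal_of_def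
    by auto
  then have "cstar x * x \<in> I" using I x unfolding closed_ideal_of_def by blast
  then have "cstar n * (cstar x * x) * cstar (cstar n) \<in> I"
    using inv normalizer_cstar[OF n] unfolding normalizer_invariant_def by blast
  then have "t \<in> I" by (simp add: t_def cstar_mult cstar_cstar mult.assoc)
  then have "t * t \<in> I" using I unfolding closed_ideal_of_def by blast
  then have "clspan (setmult UNIV {t * t}) \<subseteq> clspan (setmult UNIV I)"
    by (intro clspan_subset_clspan order_trans[OF _ clspan_superset]) (auto simp: setmult_def)
  then show "x * n \<in> clspan (setmult UNIV I)"
    using mem_clspan_left_mult_square[of "x * n"] by (auto simp: t_def)
qed

lemma right_mult_mem_clspan_of_invariant_ideal:
  assumes reg: "regular_subalgebra A" and I: "closed_ideal_of A I"
    and inv: "normalizer_invariant A I" and x: "x \<in> I"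
  shows "b * x \<in> clspan (setmult I UNIV)"
proof (rule right_mult_mem_clspan_of_normalizers[OF reg])
  fix n assume n: "normalizer A n"
  define s where "s = (n * x) * cstar (n * x)"
  have "cstar x \<in> A" "I \<subseteq> A"
    using reg I x unfolding regular_subalgebra_def closed_star_subalgebra_def closed_ideal_of_def
    by auto
  then have "x * cstar x \<in> I" using I x unfolding closed_ideal_of_def by blast
  then have "n * (x * cstar x) * cstar n \<in> I"
    using inv n unfolding normalizer_invariant_def by blast
  then have "s \<in> I" by (simp add: s_def cstar_mult mult.assoc)
  then have "s * s \<in> I" using I unfolding closed_ideal_of_def by blast
  then have "clspan (setmult {s * s} UNIV) \<subseteq> clspan (setmult I UNIV)"
    by (intro clspan_subset_clspan order_trans[OF _ clspan_superset]) (auto simp: setmult_def)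
  then show "n * x \<in> clspan (setmult I UNIV)"
    using mem_clspan_right_mult_square[of "n * x"] by (auto simp: s_def)
qed

lemma B_invariant_of_normalizer_invariant:
  assumes "regular_subalgebra A" "closed_ideal_of A I" "normalizer_invariant A I"
  shows "B_invariant I"
proof -
  have "clspan (setmult I UNIV) \<subseteq> clspan (setmult UNIV I)"
    using left_mult_mem_clspan_of_invariant_ideal[OF assms]
    by (intro clspan_subset_clspan) (auto simp: setmult_def)
  moreover have "clspan (setmult UNIV I) \<subseteq> clspan (setmult I UNIV)"
    using right_mult_mem_clspan_of_invariant_ideal[OF assms]
    by (intro clspan_subset_clspan) (auto simp: setmult_def)
  ultimately show ?thesis unfolding B_invariant_def by blast
qed

lemma normalizer_invariant_Int:
  assumes "closed_ideal J"
  shows "normalizer_invariant A (J \<inter> A)"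
  using assms unfolding normalizer_invariant_def normalizer_def closed_ideal_def by blast

lemma closed_ideal_of_Int:
  assumes "closed_star_subalgebra A" "closed_ideal J"
  shows "closed_ideal_of A (J \<inter> A)"
  using assms
  unfolding closed_ideal_of_def closed_ideal_def closed_star_subalgebra_def csubspace_def
  by (auto intro: closed_Int)

theorem proposition4p2:
  fixes A :: "'a::cstar_algebra set"
  assumes "regular_subalgebra A"
  shows "(\<forall>J. closed_ideal J \<longrightarrow> normalizer_invariant A (J \<inter> A))
       \<and> (\<forall>I. closed_ideal_of A I \<and> normalizer_invariant A I \<longrightarrow> B_invariant I)
       \<and> axiom_inv A"
proof (intro conjI allI impI)
  show "normalizer_invariant A (J \<inter> A)" if "closed_ideal J" for J :: "'a set"
    using that by (rule normalizer_invariant_Int)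
  show "B_invariant I" if "closed_ideal_of A I \<and> normalizer_invariant A I" for I
    using B_invariant_of_normalizer_invariant assms that by blast
  have "closed_star_subalgebra A" using assms unfolding regular_subalgebra_def by blast
  then show "axiom_inv A"
    unfolding axiom_inv_def
    using B_invariant_of_normalizer_invariant[OF assms] closed_ideal_of_Int normalizer_invariant_Int
    by blast
qed

end
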